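(* Let $S$ and $T$ be left fairly amenable semigroups. Then the direct product $S\times T$ (with componentwise multiplication) is left fairly amenable. The same holds with "right" in place of "left".
   Context: For a semigroup $U$, $s\in U$, $A\subseteq U$: $s$ acts injectively on the left (right) of $A$ if $a\mapsto sa$ ($a\mapsto as$) is injective on $A$. A finitely-additive probability measure on $U$ is $\mu:\mathcal P(U)\to[0,1]$ with $\mu(U)=1$, additive on disjoint sets; it is left fairly invariant if $\mu(sA)=\mu(A)$ whenever $s$ acts injectively on the left of $A$ (right fairly invariant analogously with $As$). $U$ is left (right) fairly amenable if it admits a left (right) fairly invariant finitely-additive probability measure. *)

theory Defs
  imports Complex_Main
begin

definition fa_prob_measure :: "('a set \<Rightarrow> real) \<Rightarrow> bool" where
  "fa_prob_measure \<mu> \<longleftrightarrow>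
     (\<forall>A. 0 \<le> \<mu> A \<and> \<mu> A \<le> 1) \<and> \<mu> UNIV = 1 \<and>
     (\<forall>A B. A \<inter> B = {} \<longrightarrow> \<mu> (A \<union> B) = \<mu> A + \<mu> B)"

definition left_fairly_invariant :: "('a \<Rightarrow> 'a \<Rightarrow> 'a) \<Rightarrow> ('a set \<Rightarrow> real) \<Rightarrow> bool" where
  "left_fairly_invariant mult \<mu> \<longleftrightarrow>
     (\<forall>s A. inj_on (\<lambda>a. mult s a) A \<longrightarrow> \<mu> ((\<lambda>a. mult s a) ` A) = \<mu> A)"

definition right_fairly_invariant :: "('a \<Rightarrow> 'a \<Rightarrow> 'a) \<Rightarrow> ('a set \<Rightarrow> real) \<Rightarrow> bool" where
  "right_fairly_invariant mult \<mu> \<longleftrightarrow>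
     (\<forall>s A. inj_on (\<lambda>a. mult a s) A \<longrightarrow> \<mu> ((\<lambda>a. mult a s) ` A) = \<mu> A)"

definition left_fairly_amenable :: "('a \<Rightarrow> 'a \<Rightarrow> 'a) \<Rightarrow> bool" where
  "left_fairly_amenable mult \<longleftrightarrow> (\<exists>\<mu>. fa_prob_measure \<mu> \<and> left_fairly_invariant mult \<mu>)"

definition right_fairly_amenable :: "('a \<Rightarrow> 'a \<Rightarrow> 'a) \<Rightarrow> bool" where
  "right_fairly_amenable mult \<longleftrightarrow> (\<exists>\<mu>. fa_prob_measure \<mu> \<and> right_fairly_invariant mult \<mu>)"

definition prod_mult :: "('a::semigroup_mult \<times> 'b::semigroup_mult) \<Rightarrow> ('a \<times> 'b) \<Rightarrow> ('a \<times> 'b)" where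
  "prod_mult x y = (fst x * fst y, snd x * snd y)"

end

theory Submission
  imports Defs "HOL-Library.Disjoint_Sets"
begin

text \<open>
  Given fairly invariant means \<open>\<mu>\<close> on \<open>S\<close> and \<open>\<nu>\<close> on \<open>T\<close>, take the product mean
  \<open>E \<mapsto> \<integral> \<nu>(E\<^sub>a) d\<mu>(a)\<close>, where \<open>E\<^sub>a\<close> is the slice of \<open>E\<close> over \<open>a\<close> and the integral of a
  \<open>[0, 1]\<close>-valued function against a finitely additive measure is the limit of the integrals
  of its finitely-valued quantizations.

  Let \<open>(s, t)\<close> act injectively on \<open>C\<close>. Slices of \<open>C\<close> over distinct points of a fibre of
  \<open>a \<mapsto> s a\<close> are disjoint, so each fibre contains at most \<open>N\<^sup>2\<close> points with a slice of measure
  \<open>\<ge> 1/N\<^sup>2\<close>. These heavy points split into \<open>N\<^sup>2\<close> pieces on which \<open>a \<mapsto> s a\<close> is injective, and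
  over each piece the measure is exactly preserved, by invariance of \<open>\<mu>\<close> and \<open>\<nu>\<close>. The light part
  has measure \<open>\<le> 1/N\<^sup>2\<close>, and its image has measure \<open>\<le> 2/N\<close>: an image slice of measure
  \<open>> 1/N\<close> lies over a point with at least \<open>N\<close> preimages, and by invariance such points form a
  set of measure \<open>\<le> 1/N\<close>. Letting \<open>N \<rightarrow> \<infinity>\<close> gives invariance; the right-handed statement is
  the left-handed one for the opposite multiplications.
\<close>

section \<open>Finitely additive probability measures\<close>

context
  fixes \<mu> :: "'a set \<Rightarrow> real"
  assumes \<mu>: "fa_prob_measure \<mu>"
begin

lemma fa_prob_measure_nonneg: "0 \<le> \<mu> A"
  using \<mu> by (simp add: fa_prob_measure_def)

lemma fa_prob_measure_le_1: "\<mu> A \<le> 1"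
  using \<mu> by (simp add: fa_prob_measure_def)

lemma fa_prob_measure_UNIV: "\<mu> UNIV = 1"
  using \<mu> by (simp add: fa_prob_measure_def)

lemma fa_prob_measure_Un: "A \<inter> B = {} \<Longrightarrow> \<mu> (A \<union> B) = \<mu> A + \<mu> B"
  using \<mu> by (simp add: fa_prob_measure_def)

lemma fa_prob_measure_empty: "\<mu> {} = 0"
  using fa_prob_measure_Un[of "{}" "{}"] by simp

lemma fa_prob_measure_mono: "A \<subseteq> B \<Longrightarrow> \<mu> A \<le> \<mu> B"
  using fa_prob_measure_Un[of A "B - A"] fa_prob_measure_nonneg[of "B - A"]
  by (simp add: Un_absorb1)

lemma fa_prob_measure_Un_le: "\<mu> (A \<union> B) \<le> \<mu> A + \<mu> B"
  using fa_prob_measure_Un[of A "B - A"] fa_prob_measure_mono[of "B - A" B] by simp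

lemma fa_prob_measure_UN:
  assumes "finite I" "disjoint_family_on B I"
  shows "\<mu> (\<Union>i\<in>I. B i) = (\<Sum>i\<in>I. \<mu> (B i))"
  using assms
proof (induction I rule: finite_induct)
  case (insert i I)
  then have "B i \<inter> (\<Union>j\<in>I. B j) = {}" "disjoint_family_on B I"
    by (auto simp: disjoint_family_on_def)
  with insert show ?case by (simp add: fa_prob_measure_Un)
qed (simp add: fa_prob_measure_empty)

lemma fa_prob_measure_UN_le:
  assumes "finite I"
  shows "\<mu> (\<Union>i\<in>I. B i) \<le> (\<Sum>i\<in>I. \<mu> (B i))"
  using assms
proof (induction I rule: finite_induct)
  case (insert i I)
  then show ?case using fa_prob_measure_Un_le[of "B i" "\<Union>j\<in>I. B j"] by simp
qed (simp add: fa_prob_measure_empty)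

end

lemma ex_inj_on_lessThan_into:
  assumes "infinite S \<or> N \<le> card S"
  shows "\<exists>d. inj_on d {..<N} \<and> d ` {..<N} \<subseteq> S"
proof -
  obtain B where B: "finite B" "N \<le> card B" "B \<subseteq> S"
    using assms infinite_arbitrarily_large[of S N] by (cases "finite S") auto
  then obtain d where "d ` {..<N} \<subseteq> B" "inj_on d {..<N}"
    using card_le_inj[of "{..<N}" B] by auto
  then show ?thesis using B(3) by blast
qed

text \<open>Each point of \<open>X\<close> lifts along \<open>f\<close> in \<open>N\<close> different ways, giving \<open>N\<close> disjoint
  sets of the same measure as \<open>X\<close>.\<close>
lemma fa_prob_measure_many_preimages:
  assumes \<mu>: "fa_prob_measure \<mu>" and inv: "\<And>A. inj_on f A \<Longrightarrow> \<mu> (f ` A) = \<mu> A"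
    and many: "\<And>x. x \<in> X \<Longrightarrow> infinite (f -` {x}) \<or> N \<le> card (f -` {x})"
  shows "real N * \<mu> X \<le> 1"
proof -
  have "\<forall>x\<in>X. \<exists>d. inj_on d {..<N} \<and> d ` {..<N} \<subseteq> f -` {x}"
    using ex_inj_on_lessThan_into[OF many] by blast
  then obtain d where d: "\<And>x. x \<in> X \<Longrightarrow> inj_on (d x) {..<N} \<and> d x ` {..<N} \<subseteq> f -` {x}"
    by metis
  define Q where "Q i = (\<lambda>x. d x i) ` X" for i
  have fd: "f (d x i) = x" if "x \<in> X" "i < N" for x i
    using d[OF that(1)] that(2) by auto
  have "\<mu> (Q i) = \<mu> X" if "i < N" for i
  proof -
    have "inj_on f (Q i)"
    proof (rule inj_onI)
      fix z z' assume "z \<in> Q i" "z' \<in> Q i" "f z = f z'"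
      then obtain x x' where "x \<in> X" "x' \<in> X" "z = d x i" "z' = d x' i" by (auto simp: Q_def)
      then show "z = z'" using fd that \<open>f z = f z'\<close> by simp
    qed
    moreover have "f ` Q i = X" unfolding Q_def image_image using fd[OF _ that] by simp
    ultimately show ?thesis using inv[of "Q i"] by simp
  qed
  moreover have "disjoint_family_on Q {..<N}"
    unfolding disjoint_family_on_def
  proof (intro ballI impI)
    fix i j assume ij: "i \<in> {..<N}" "j \<in> {..<N}" "i \<noteq> j"
    have "d x i \<noteq> d x' j" if "x \<in> X" "x' \<in> X" for x x'
    proof (cases "x = x'")
      case True then show ?thesis using d[OF that(1)] ij inj_onD[of "d x" "{..<N}" i j] by auto
    next
      case False then show ?thesis using fd[OF that(1), of i] fd[OF that(2), of j] ij by auto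
    qed
    then show "Q i \<inter> Q j = {}" by (auto simp: Q_def)
  qed
  then have "\<mu> (\<Union>i<N. Q i) = (\<Sum>i<N. \<mu> (Q i))" by (simp add: fa_prob_measure_UN[OF \<mu>])
  ultimately show ?thesis using fa_prob_measure_le_1[OF \<mu>, of "\<Union>i<N. Q i"] by simp
qed

lemma split_into_inj_on_pieces:
  assumes "\<And>x. finite {a \<in> A. f a = x} \<and> card {a \<in> A. f a = x} \<le> K"
  obtains P where "A = (\<Union>i<K. P i)" "disjoint_family_on P {..<K}" "\<And>i. inj_on f (P i)"
proof -
  have "\<exists>e. inj_on e {a \<in> A. f a = x} \<and> e ` {a \<in> A. f a = x} \<subseteq> {..<K}" for x
    using assms[of x] card_le_inj[of "{a \<in> A. f a = x}" "{..<K}"] by auto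
  then obtain e where e: "\<And>x. inj_on (e x) {a \<in> A. f a = x}" "\<And>x. e x ` {a \<in> A. f a = x} \<subseteq> {..<K}"
    by metis
  define P where "P i = {a \<in> A. e (f a) a = i}" for i
  show ?thesis
  proof
    have "e (f a) a < K" if "a \<in> A" for a using e(2)[of "f a"] that by blast
    then show "A = (\<Union>i<K. P i)" by (auto simp: P_def)
    show "disjoint_family_on P {..<K}" by (auto simp: disjoint_family_on_def P_def)
    show "inj_on f (P i)" for i
    proof (rule inj_onI)
      fix a a' assume "a \<in> P i" "a' \<in> P i" "f a = f a'"
      then show "a = a'" using inj_onD[OF e(1)[of "f a"], of a a'] by (simp add: P_def)
    qed
  qed
qed

lemma fa_prob_measure_image_diff_eq:
  fixes K :: nat
  assumes \<rho>: "fa_prob_measure \<rho>" and inj: "inj_on w C"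
    and C: "C = R \<union> (\<Union>i<K. P i)" "R \<inter> (\<Union>i<K. P i) = {}" "disjoint_family_on P {..<K}"
    and P: "\<And>i. i < K \<Longrightarrow> \<rho> (w ` P i) = \<rho> (P i)"
  shows "\<rho> (w ` C) - \<rho> C = \<rho> (w ` R) - \<rho> R"
proof -
  have "\<rho> C = \<rho> R + (\<Sum>i<K. \<rho> (P i))"
    using C fa_prob_measure_UN[OF \<rho>, of "{..<K}" P] by (simp add: fa_prob_measure_Un[OF \<rho>])
  moreover have "\<rho> (w ` C) = \<rho> (w ` R) + (\<Sum>i<K. \<rho> (w ` P i))"
  proof -
    have "R \<subseteq> C" "(\<Union>i<K. P i) \<subseteq> C" using C(1) by blast+
    then have "w ` R \<inter> (\<Union>i<K. w ` P i) = {}"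
      using C(2) inj_on_image_Int[OF inj, of R "\<Union>i<K. P i"] by (simp add: image_UN)
    moreover have "disjoint_family_on (\<lambda>i. w ` P i) {..<K}"
      unfolding disjoint_family_on_def
    proof (intro ballI impI)
      fix i j assume "i \<in> {..<K}" "j \<in> {..<K}" "i \<noteq> j"
      then have "P i \<inter> P j = {}" "P i \<subseteq> C" "P j \<subseteq> C"
        using C(1,3) by (auto simp: disjoint_family_on_def)
      then show "w ` P i \<inter> w ` P j = {}" using inj_on_image_Int[OF inj, of "P i" "P j"] by simp
    qed
    ultimately show ?thesis
      using fa_prob_measure_UN[OF \<rho>, of "{..<K}" "\<lambda>i. w ` P i"]
      by (simp add: C(1) image_Un image_UN fa_prob_measure_Un[OF \<rho>])
  qed
  ultimately show ?thesis using P by simp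
qed

section \<open>Integrals of finitely-valued functions\<close>

text \<open>Only meaningful for functions with finite range: otherwise the sum is \<open>0\<close> by convention.\<close>
definition simple_integral :: "('a set \<Rightarrow> real) \<Rightarrow> ('a \<Rightarrow> real) \<Rightarrow> real" where
  "simple_integral \<mu> f = (\<Sum>v\<in>range f. v * \<mu> (f -` {v}))"

context
  fixes \<mu> :: "'a set \<Rightarrow> real"
  assumes \<mu>: "fa_prob_measure \<mu>"
begin

lemma simple_integral_comp:
  assumes "finite R" "range \<Phi> \<subseteq> R"
  shows "simple_integral \<mu> (\<lambda>x. h (\<Phi> x)) = (\<Sum>p\<in>R. h p * \<mu> (\<Phi> -` {p}))"
proof -
  have "finite (range \<Phi>)" using assms finite_subset by blast
  have fibre: "\<mu> ((\<lambda>x. h (\<Phi> x)) -` {v}) = (\<Sum>p\<in>{p\<in>range \<Phi>. h p = v}. \<mu> (\<Phi> -` {p}))" for v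
  proof -
    have "(\<lambda>x. h (\<Phi> x)) -` {v} = (\<Union>p\<in>{p\<in>range \<Phi>. h p = v}. \<Phi> -` {p})" by auto
    moreover have "disjoint_family_on (\<lambda>p. \<Phi> -` {p}) {p\<in>range \<Phi>. h p = v}"
      by (auto simp: disjoint_family_on_def)
    ultimately show ?thesis
      using fa_prob_measure_UN[OF \<mu>, of "{p\<in>range \<Phi>. h p = v}" "\<lambda>p. \<Phi> -` {p}"]
        \<open>finite (range \<Phi>)\<close> by simp
  qed
  have "simple_integral \<mu> (\<lambda>x. h (\<Phi> x))
      = (\<Sum>v\<in>h ` range \<Phi>. (\<Sum>p\<in>{p\<in>range \<Phi>. h p = v}. h p * \<mu> (\<Phi> -` {p})))"
    unfolding simple_integral_def fibre image_image[symmetric, of h \<Phi>]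
    by (auto simp: sum_distrib_left intro!: sum.cong)
  also have "\<dots> = (\<Sum>p\<in>range \<Phi>. h p * \<mu> (\<Phi> -` {p}))"
    by (rule sum.image_gen[symmetric]) fact
  also have "\<dots> = (\<Sum>p\<in>R. h p * \<mu> (\<Phi> -` {p}))"
  proof (rule sum.mono_neutral_left[OF assms])
    show "\<forall>p\<in>R - range \<Phi>. h p * \<mu> (\<Phi> -` {p}) = 0"
    proof
      fix p assume "p \<in> R - range \<Phi>"
      then have "\<Phi> -` {p} = {}" by auto
      then show "h p * \<mu> (\<Phi> -` {p}) = 0" by (simp add: fa_prob_measure_empty[OF \<mu>])
    qed
  qed
  finally show ?thesis .
qed

lemma simple_integral_eq_sum:
  "finite R \<Longrightarrow> range f \<subseteq> R \<Longrightarrow> simple_integral \<mu> f = (\<Sum>v\<in>R. v * \<mu> (f -` {v}))"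
  using simple_integral_comp[of R f "\<lambda>x. x"] by simp

lemma simple_integral_const: "simple_integral \<mu> (\<lambda>x. c) = c"
  using simple_integral_eq_sum[of "{c}" "\<lambda>x. c"] fa_prob_measure_UNIV[OF \<mu>] by simp

lemma simple_integral_if:
  "simple_integral \<mu> (\<lambda>x. if x \<in> A then a else b) = a * \<mu> A + b * \<mu> (- A)"
proof -
  have "simple_integral \<mu> (\<lambda>x. if x \<in> A then a else b)
      = (\<Sum>t\<in>UNIV. (if t then a else b) * \<mu> ((\<lambda>x. x \<in> A) -` {t}))"
    by (rule simple_integral_comp) auto
  then show ?thesis by (simp add: UNIV_bool vimage_def Compl_eq add.commute)
qed

text \<open>Both sides are computed over the joint partition by the values of \<open>(f, g)\<close>.\<close>
lemma simple_integral_add: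
  assumes "finite (range f)" "finite (range g)"
  shows "simple_integral \<mu> (\<lambda>x. f x + g x) = simple_integral \<mu> f + simple_integral \<mu> g"
proof -
  let ?\<Phi> = "\<lambda>x. (f x, g x)"
  have R: "finite (range f \<times> range g)" "range ?\<Phi> \<subseteq> range f \<times> range g"
    using assms by auto
  show ?thesis
    using simple_integral_comp[OF R, of "\<lambda>p. fst p + snd p"]
      simple_integral_comp[OF R, of fst] simple_integral_comp[OF R, of snd]
    by (simp add: distrib_right sum.distrib)
qed

lemma simple_integral_mono:
  assumes "finite (range f)" "finite (range g)" "\<And>x. f x \<le> g x"
  shows "simple_integral \<mu> f \<le> simple_integral \<mu> g"
proof -
  let ?\<Phi> = "\<lambda>x. (f x, g x)"
  have R: "finite (range ?\<Phi>)" "range ?\<Phi> \<subseteq> range ?\<Phi>"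
    using assms(1,2) finite_subset[of "range ?\<Phi>" "range f \<times> range g"] by auto
  show ?thesis
    unfolding simple_integral_comp[OF R, of fst, simplified] simple_integral_comp[OF R, of snd, simplified]
    by (rule sum_mono) (auto intro!: mult_right_mono fa_prob_measure_nonneg[OF \<mu>] assms(3))
qed

lemma simple_integral_le_add_const:
  assumes "finite (range f)" "finite (range g)" "\<And>x. f x \<le> g x + c"
  shows "simple_integral \<mu> f \<le> simple_integral \<mu> g + c"
proof -
  have "range (\<lambda>x. g x + c) = (\<lambda>v. v + c) ` range g" by auto
  then have "finite (range (\<lambda>x. g x + c))" using assms(2) by simp
  then have "simple_integral \<mu> f \<le> simple_integral \<mu> (\<lambda>x. g x + c)"
    by (rule simple_integral_mono[OF assms(1) _ assms(3)])
  also have "\<dots> = simple_integral \<mu> g + c"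
    using simple_integral_add[OF assms(2), of "\<lambda>x. c"] simple_integral_const by simp
  finally show ?thesis .
qed

lemma simple_integral_transfer:
  assumes "finite (range F)" "finite (range G)"
    and inv: "\<And>A. A \<subseteq> D \<Longrightarrow> \<mu> (h ` A) = \<mu> A"
    and F: "\<And>x. x \<notin> D \<Longrightarrow> F x = 0" and G: "\<And>y. y \<notin> h ` D \<Longrightarrow> G y = 0"
    and GF: "\<And>x. x \<in> D \<Longrightarrow> G (h x) = F x"
  shows "simple_integral \<mu> G = simple_integral \<mu> F"
proof -
  have level: "\<mu> (G -` {v}) = \<mu> (F -` {v})" if "v \<noteq> 0" for v
  proof -
    have "F -` {v} \<subseteq> D" using F that by auto
    moreover have "G -` {v} = h ` (F -` {v})"
    proof (intro equalityI subsetI)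
      fix y assume "y \<in> G -` {v}"
      then have "y \<in> h ` D" using G that by fastforce
      then obtain x where "x \<in> D" "y = h x" by blast
      then show "y \<in> h ` (F -` {v})" using GF \<open>y \<in> G -` {v}\<close> by auto
    next
      fix y assume "y \<in> h ` (F -` {v})"
      then show "y \<in> G -` {v}" using F GF that by force
    qed
    ultimately show ?thesis using inv by simp
  qed
  let ?R = "range F \<union> range G"
  have "simple_integral \<mu> G = (\<Sum>v\<in>?R. v * \<mu> (G -` {v}))"
    using assms(1,2) by (intro simple_integral_eq_sum) auto
  also have "\<dots> = (\<Sum>v\<in>?R. v * \<mu> (F -` {v}))"
    using level by (intro sum.cong) auto
  also have "\<dots> = simple_integral \<mu> F"
    using assms(1,2) by (intro simple_integral_eq_sum[symmetric]) auto
  finally show ?thesis .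
qed

end

section \<open>Integrals of bounded functions\<close>

lemma finite_range_plus:
  "finite (range f) \<Longrightarrow> finite (range g) \<Longrightarrow> finite (range (\<lambda>x. f x + g x))"
  using finite_subset[of "range (\<lambda>x. f x + g x)" "(\<lambda>(a, b). a + b) ` (range f \<times> range g)"]
  by auto

lemma convergent_if_le_add_inverse_Suc:
  fixes X :: "nat \<Rightarrow> real"
  assumes "\<And>m n. X m \<le> X n + 1 / real (Suc n)"
  shows "convergent X"
proof -
  have "Cauchy X"
  proof (rule metric_CauchyI)
    fix e :: real assume "0 < e"
    then obtain M where M: "inverse (real (Suc M)) < e"
      using reals_Archimedean by blast
    have "dist (X m) (X n) < e" if "M \<le> m" "M \<le> n" for m n
    proof -
      have "1 / real (Suc m) \<le> 1 / real (Suc M)" "1 / real (Suc n) \<le> 1 / real (Suc M)"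
        using that by (simp_all add: frac_le)
      then show ?thesis
        using assms[of m n] assms[of n m] M by (simp add: dist_real_def inverse_eq_divide)
    qed
    then show "\<exists>M. \<forall>m\<ge>M. \<forall>n\<ge>M. dist (X m) (X n) < e" by blast
  qed
  then show ?thesis by (simp add: Cauchy_convergent_iff)
qed

lemma LIMSEQ_le_vanishing:
  fixes X Y :: "nat \<Rightarrow> real"
  assumes "X \<longlonglongrightarrow> x" "Y \<longlonglongrightarrow> y" "\<And>n. X n \<le> Y n + c / real (Suc n)"
  shows "x \<le> y"
proof -
  have "(\<lambda>n. c * inverse (real (Suc n))) \<longlonglongrightarrow> c * 0"
    by (intro tendsto_mult tendsto_const LIMSEQ_inverse_real_of_nat)
  then have "(\<lambda>n. Y n + c / real (Suc n)) \<longlonglongrightarrow> y + 0"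
    by (intro tendsto_add assms(2)) (simp add: divide_inverse)
  then show ?thesis using assms(1,3) by (intro LIMSEQ_le) auto
qed

definition quantize :: "nat \<Rightarrow> real \<Rightarrow> real" where
  "quantize n x = of_int \<lfloor>real n * x\<rfloor> / real n"

lemma quantize_le: "0 < n \<Longrightarrow> quantize n x \<le> x"
  unfolding quantize_def by (simp add: divide_le_eq mult.commute)

lemma le_quantize:
  assumes "0 < n" shows "x \<le> quantize n x + 1 / real n"
proof -
  have "real n * x \<le> of_int \<lfloor>real n * x\<rfloor> + 1" by linarith
  then show ?thesis using assms unfolding quantize_def by (simp add: field_simps)
qed

lemma quantize_nonneg: "0 \<le> x \<Longrightarrow> 0 \<le> quantize n x"
  unfolding quantize_def by simp

lemma quantize_0 [simp]: "quantize n 0 = 0"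
  unfolding quantize_def by simp

lemma quantize_1: "0 < n \<Longrightarrow> quantize n 1 = 1"
  unfolding quantize_def by simp

lemma finite_range_quantize:
  assumes "range f \<subseteq> {0..1}"
  shows "finite (range (\<lambda>x. quantize n (f x)))"
proof -
  have "\<lfloor>real n * f x\<rfloor> \<in> {0..int n}" for x
  proof -
    have "0 \<le> f x" "f x \<le> 1" using assms by (auto simp: image_subset_iff)
    then show ?thesis using mult_left_mono[of "f x" 1 "real n"] by (simp add: floor_le_iff)
  qed
  then have "range (\<lambda>x. quantize n (f x)) \<subseteq> (\<lambda>k. of_int k / real n) ` {0..int n}"
    unfolding quantize_def by blast
  then show ?thesis using finite_subset by blast
qed

text \<open>A genuine limit only for \<open>[0, 1]\<close>-valued \<open>f\<close>, by \<open>fa_integral_LIMSEQ\<close>.\<close>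
definition fa_integral :: "('a set \<Rightarrow> real) \<Rightarrow> ('a \<Rightarrow> real) \<Rightarrow> real" where
  "fa_integral \<mu> f = lim (\<lambda>n. simple_integral \<mu> (\<lambda>x. quantize (Suc n) (f x)))"

context
  fixes \<mu> :: "'a set \<Rightarrow> real"
  assumes \<mu>: "fa_prob_measure \<mu>"
begin

lemma simple_integral_quantize_le:
  assumes "range f \<subseteq> {0..1}" "range g \<subseteq> {0..1}" "\<And>x. f x \<le> g x + c"
  shows "simple_integral \<mu> (\<lambda>x. quantize (Suc m) (f x))
           \<le> simple_integral \<mu> (\<lambda>x. quantize (Suc n) (g x)) + (c + 1 / real (Suc n))"
proof (rule simple_integral_le_add_const[OF \<mu> finite_range_quantize finite_range_quantize])
  fix x
  have "quantize (Suc m) (f x) \<le> f x" by (simp add: quantize_le)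
  also have "\<dots> \<le> g x + c" by fact
  also have "g x \<le> quantize (Suc n) (g x) + 1 / real (Suc n)" by (rule le_quantize) simp
  finally show "quantize (Suc m) (f x) \<le> quantize (Suc n) (g x) + (c + 1 / real (Suc n))"
    by simp
qed fact+

lemma fa_integral_LIMSEQ:
  assumes "range f \<subseteq> {0..1}"
  shows "(\<lambda>n. simple_integral \<mu> (\<lambda>x. quantize (Suc n) (f x))) \<longlonglongrightarrow> fa_integral \<mu> f"
proof -
  have "convergent (\<lambda>n. simple_integral \<mu> (\<lambda>x. quantize (Suc n) (f x)))"
    by (rule convergent_if_le_add_inverse_Suc)
      (use simple_integral_quantize_le[OF assms assms, of 0] in simp)
  then show ?thesis unfolding fa_integral_def by (simp add: convergent_LIMSEQ_iff)
qed

lemma fa_integral_nonneg: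
  assumes "range f \<subseteq> {0..1}"
  shows "0 \<le> fa_integral \<mu> f"
proof (rule LIMSEQ_le_const[OF fa_integral_LIMSEQ[OF assms]], intro exI allI impI)
  fix n
  have "simple_integral \<mu> (\<lambda>x. 0) \<le> simple_integral \<mu> (\<lambda>x. quantize (Suc n) (f x)) + 0"
    using assms
    by (intro simple_integral_le_add_const[OF \<mu> _ finite_range_quantize])
      (auto simp: quantize_nonneg image_subset_iff)
  then show "0 \<le> simple_integral \<mu> (\<lambda>x. quantize (Suc n) (f x))"
    by (simp add: simple_integral_const[OF \<mu>])
qed

lemma fa_integral_one: "fa_integral \<mu> (\<lambda>x. 1) = 1"
  unfolding fa_integral_def by (simp add: quantize_1 simple_integral_const[OF \<mu>])

lemma fa_integral_le_level_set:
  assumes "range f \<subseteq> {0..1}" "0 \<le> c"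
  shows "fa_integral \<mu> f \<le> c + \<mu> {x. c < f x}"
proof (rule LIMSEQ_le_const2[OF fa_integral_LIMSEQ[OF assms(1)]], intro exI allI impI)
  fix n
  let ?A = "{x. c < f x}"
  have "simple_integral \<mu> (\<lambda>x. quantize (Suc n) (f x))
      \<le> simple_integral \<mu> (\<lambda>x. if x \<in> ?A then 1 else c) + 0"
  proof (rule simple_integral_le_add_const[OF \<mu> finite_range_quantize[OF assms(1)]])
    show "finite (range (\<lambda>x. if x \<in> ?A then 1 else c))"
      by (rule finite_subset[of _ "{1, c}"]) auto
    fix x
    have "quantize (Suc n) (f x) \<le> f x" "f x \<le> 1"
      using assms(1) by (auto simp: quantize_le image_subset_iff)
    then show "quantize (Suc n) (f x) \<le> (if x \<in> ?A then 1 else c) + 0" by auto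
  qed
  also have "\<dots> = \<mu> ?A + c * \<mu> (- ?A)" using simple_integral_if[OF \<mu>, of ?A 1 c] by simp
  also have "\<dots> \<le> \<mu> ?A + c"
    using fa_prob_measure_le_1[OF \<mu>, of "- ?A"] assms(2) by (simp add: mult_left_le)
  finally show "simple_integral \<mu> (\<lambda>x. quantize (Suc n) (f x)) \<le> c + \<mu> ?A" by simp
qed

lemma fa_integral_add:
  assumes f: "range f \<subseteq> {0..1}" and g: "range g \<subseteq> {0..1}"
    and fg: "range (\<lambda>x. f x + g x) \<subseteq> {0..1}"
  shows "fa_integral \<mu> (\<lambda>x. f x + g x) = fa_integral \<mu> f + fa_integral \<mu> g"
proof -
  let ?I = "\<lambda>h n. simple_integral \<mu> (\<lambda>x. quantize (Suc n) (h x))"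
  let ?q = "\<lambda>n x. quantize (Suc n) (f x) + quantize (Suc n) (g x)"
  have fin: "finite (range (?q n))" for n
    by (intro finite_range_plus finite_range_quantize f g)
  have sum: "?I f n + ?I g n = simple_integral \<mu> (?q n)" for n
    using simple_integral_add[OF \<mu> finite_range_quantize[OF f] finite_range_quantize[OF g]] by simp
  have le: "?I (\<lambda>x. f x + g x) n \<le> (?I f n + ?I g n) + 2 / real (Suc n)" for n
    unfolding sum
  proof (rule simple_integral_le_add_const[OF \<mu> finite_range_quantize[OF fg] fin])
    fix x
    have "quantize (Suc n) (f x + g x) \<le> f x + g x" by (simp add: quantize_le)
    also have "\<dots> \<le> (quantize (Suc n) (f x) + 1 / real (Suc n)) + (quantize (Suc n) (g x) + 1 / real (Suc n))"
      by (intro add_mono le_quantize) simp_all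
    finally show "quantize (Suc n) (f x + g x) \<le> ?q n x + 2 / real (Suc n)" by simp
  qed
  have ge: "?I f n + ?I g n \<le> ?I (\<lambda>x. f x + g x) n + 1 / real (Suc n)" for n
    unfolding sum
  proof (rule simple_integral_le_add_const[OF \<mu> fin finite_range_quantize[OF fg]])
    fix x
    have "?q n x \<le> f x + g x" by (intro add_mono quantize_le) simp_all
    also have "\<dots> \<le> quantize (Suc n) (f x + g x) + 1 / real (Suc n)" by (rule le_quantize) simp
    finally show "?q n x \<le> quantize (Suc n) (f x + g x) + 1 / real (Suc n)" .
  qed
  have lim: "(\<lambda>n. ?I f n + ?I g n) \<longlonglongrightarrow> fa_integral \<mu> f + fa_integral \<mu> g"
    by (intro tendsto_add fa_integral_LIMSEQ f g)
  show ?thesis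
    using LIMSEQ_le_vanishing[OF fa_integral_LIMSEQ[OF fg] lim le]
      LIMSEQ_le_vanishing[OF lim fa_integral_LIMSEQ[OF fg] ge] by simp
qed

lemma fa_integral_transfer:
  assumes "range f \<subseteq> {0..1}" "range g \<subseteq> {0..1}"
    and "\<And>A. A \<subseteq> D \<Longrightarrow> \<mu> (h ` A) = \<mu> A"
    and f0: "\<And>x. x \<notin> D \<Longrightarrow> f x = 0" and g0: "\<And>y. y \<notin> h ` D \<Longrightarrow> g y = 0"
    and gf: "\<And>x. x \<in> D \<Longrightarrow> g (h x) = f x"
  shows "fa_integral \<mu> g = fa_integral \<mu> f"
proof -
  have "simple_integral \<mu> (\<lambda>x. quantize (Suc n) (g x)) = simple_integral \<mu> (\<lambda>x. quantize (Suc n) (f x))"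
    for n
  proof (rule simple_integral_transfer[OF \<mu> finite_range_quantize[OF assms(1)]
        finite_range_quantize[OF assms(2)] assms(3)])
    show "quantize (Suc n) (f x) = 0" if "x \<notin> D" for x using f0[OF that] by simp
    show "quantize (Suc n) (g y) = 0" if "y \<notin> h ` D" for y using g0[OF that] by simp
    show "quantize (Suc n) (g (h x)) = quantize (Suc n) (f x)" if "x \<in> D" for x
      using gf[OF that] by simp
  qed
  then show ?thesis unfolding fa_integral_def by simp
qed

end

section \<open>Product of finitely additive probability measures\<close>

definition prod_fa_measure :: "('a set \<Rightarrow> real) \<Rightarrow> ('b set \<Rightarrow> real) \<Rightarrow> ('a \<times> 'b) set \<Rightarrow> real" where
  "prod_fa_measure \<mu> \<nu> E = fa_integral \<mu> (\<lambda>a. \<nu> (Pair a -` E))"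

lemma inj_on_vimage_Pair:
  assumes "inj_on (map_prod f g) C"
  shows "inj_on g (Pair a -` C)"
proof (rule inj_onI)
  fix b b' assume "b \<in> Pair a -` C" "b' \<in> Pair a -` C" "g b = g b'"
  then show "b = b'" using inj_onD[OF assms, of "(a, b)" "(a, b')"] by simp
qed

lemma vimage_Pair_disjoint:
  assumes "inj_on (map_prod f g) C" "f a = f a'" "a \<noteq> a'"
  shows "Pair a -` C \<inter> Pair a' -` C = {}"
proof -
  have "(a, b) \<notin> C \<or> (a', b) \<notin> C" for b
    using assms inj_onD[OF assms(1), of "(a, b)" "(a', b)"] by auto
  then show ?thesis by auto
qed

lemma vimage_Pair_map_prod_image:
  assumes "inj_on f (fst ` C)" "a \<in> fst ` C"
  shows "Pair (f a) -` (map_prod f g ` C) = g ` (Pair a -` C)"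
proof (intro equalityI subsetI)
  fix y assume "y \<in> Pair (f a) -` (map_prod f g ` C)"
  then obtain a' b where ab: "(a', b) \<in> C" "f a' = f a" "y = g b" by auto
  then have "a' = a" using assms inj_onD[OF assms(1)] by force
  then show "y \<in> g ` (Pair a -` C)" using ab by auto
qed (auto intro: rev_image_eqI)

lemma finite_card_fibre_heavy_vimage_Pair:
  assumes \<nu>: "fa_prob_measure \<nu>" and inj: "inj_on (map_prod f g) C" and "0 < K"
    and heavy: "\<And>a. a \<in> A \<Longrightarrow> 1 / real K \<le> \<nu> (Pair a -` C)"
  shows "finite {a \<in> A. f a = x} \<and> card {a \<in> A. f a = x} \<le> K"
proof (rule finite_if_finite_subsets_card_bdd)
  fix F assume F: "F \<subseteq> {a \<in> A. f a = x}" "finite F"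
  have "disjoint_family_on (\<lambda>a. Pair a -` C) F"
    unfolding disjoint_family_on_def
  proof (intro ballI impI)
    fix a a' assume "a \<in> F" "a' \<in> F" "a \<noteq> a'"
    moreover from calculation have "f a = f a'" using F(1) by auto
    ultimately show "Pair a -` C \<inter> Pair a' -` C = {}" by (intro vimage_Pair_disjoint[OF inj])
  qed
  then have "(\<Sum>a\<in>F. \<nu> (Pair a -` C)) = \<nu> (\<Union>a\<in>F. Pair a -` C)"
    by (rule fa_prob_measure_UN[OF \<nu> F(2), symmetric])
  then have "(\<Sum>a\<in>F. \<nu> (Pair a -` C)) \<le> 1" using fa_prob_measure_le_1[OF \<nu>] by simp
  moreover have "(\<Sum>a\<in>F. 1 / real K) \<le> (\<Sum>a\<in>F. \<nu> (Pair a -` C))"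
    using F(1) heavy by (intro sum_mono) auto
  ultimately have "real (card F) / real K \<le> 1" by simp
  then show "card F \<le> K" using \<open>0 < K\<close> by (simp add: divide_le_eq)
qed

text \<open>The heavy points of \<open>C\<close>, those whose slice has measure \<open>\<ge> 1/K\<close>, meet each fibre of \<open>f\<close>
  in at most \<open>K\<close> points, so they spread over \<open>K\<close> pieces with \<open>f\<close> injective on each.\<close>
lemma split_light_and_inj_fst_pieces:
  fixes K :: nat
  assumes \<nu>: "fa_prob_measure \<nu>" and inj: "inj_on (map_prod f g) C" and "0 < K"
  obtains R P where "C = R \<union> (\<Union>i<K. P i)" "R \<inter> (\<Union>i<K. P i) = {}" "disjoint_family_on P {..<K}"
    "\<And>i. inj_on f (fst ` P i)" "\<And>a. real K * \<nu> (Pair a -` R) \<le> 1"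
proof -
  define A where "A = {a. 1 / real K \<le> \<nu> (Pair a -` C)}"
  have "finite {a \<in> A. f a = x} \<and> card {a \<in> A. f a = x} \<le> K" for x
    by (rule finite_card_fibre_heavy_vimage_Pair[OF \<nu> inj \<open>0 < K\<close>]) (simp add: A_def)
  then obtain Q where Q: "A = (\<Union>i<K. Q i)" "disjoint_family_on Q {..<K}" "\<And>i. inj_on f (Q i)"
    by (rule split_into_inj_on_pieces) blast
  define P where "P i = {p \<in> C. fst p \<in> Q i}" for i
  define R where "R = {p \<in> C. fst p \<notin> A}"
  show ?thesis
  proof
    show "C = R \<union> (\<Union>i<K. P i)" "R \<inter> (\<Union>i<K. P i) = {}"
      using Q(1) by (auto simp: R_def P_def)
    show "disjoint_family_on P {..<K}"
      using Q(2) by (auto simp: disjoint_family_on_def P_def)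
    show "inj_on f (fst ` P i)" for i
      by (rule inj_on_subset[OF Q(3)]) (auto simp: P_def)
    show "real K * \<nu> (Pair a -` R) \<le> 1" for a
    proof (cases "a \<in> A")
      case True
      then have "Pair a -` R = {}" by (auto simp: R_def)
      then show ?thesis by (simp add: fa_prob_measure_empty[OF \<nu>])
    next
      case False
      then have "Pair a -` R = Pair a -` C" "\<nu> (Pair a -` C) < 1 / real K"
        by (auto simp: R_def A_def)
      then show ?thesis using \<open>0 < K\<close> by (simp add: field_simps)
    qed
  qed
qed

context
  fixes \<mu> :: "'a set \<Rightarrow> real" and \<nu> :: "'b set \<Rightarrow> real"
  assumes \<mu>: "fa_prob_measure \<mu>" and \<nu>: "fa_prob_measure \<nu>"
begin

lemma range_measure_vimage_Pair: "range (\<lambda>a. \<nu> (Pair a -` E)) \<subseteq> {0..1}"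
  using fa_prob_measure_nonneg[OF \<nu>] fa_prob_measure_le_1[OF \<nu>] by auto

lemma prod_fa_measure_le_level_set:
  "0 \<le> c \<Longrightarrow> prod_fa_measure \<mu> \<nu> E \<le> c + \<mu> {a. c < \<nu> (Pair a -` E)}"
  unfolding prod_fa_measure_def by (rule fa_integral_le_level_set[OF \<mu> range_measure_vimage_Pair])

lemma fa_prob_measure_prod: "fa_prob_measure (prod_fa_measure \<mu> \<nu>)"
  unfolding fa_prob_measure_def
proof (intro conjI allI impI)
  fix E
  show "0 \<le> prod_fa_measure \<mu> \<nu> E"
    unfolding prod_fa_measure_def by (rule fa_integral_nonneg[OF \<mu> range_measure_vimage_Pair])
  have "{a. 1 < \<nu> (Pair a -` E)} = {}"
    using fa_prob_measure_le_1[OF \<nu>] by (auto simp: not_less[symmetric])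
  then show "prod_fa_measure \<mu> \<nu> E \<le> 1"
    using prod_fa_measure_le_level_set[of 1 E] fa_prob_measure_empty[OF \<mu>] by simp
next
  show "prod_fa_measure \<mu> \<nu> UNIV = 1"
    unfolding prod_fa_measure_def by (simp add: fa_prob_measure_UNIV[OF \<nu>] fa_integral_one[OF \<mu>])
next
  fix C D :: "('a \<times> 'b) set" assume "C \<inter> D = {}"
  then have "\<nu> (Pair a -` (C \<union> D)) = \<nu> (Pair a -` C) + \<nu> (Pair a -` D)" for a
    by (simp add: vimage_Un fa_prob_measure_Un[OF \<nu>] flip: vimage_Int)
  then show "prod_fa_measure \<mu> \<nu> (C \<union> D) = prod_fa_measure \<mu> \<nu> C + prod_fa_measure \<mu> \<nu> D"
    unfolding prod_fa_measure_def
    using fa_integral_add[OF \<mu> range_measure_vimage_Pair range_measure_vimage_Pair, of C D]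
      range_measure_vimage_Pair[of "C \<union> D"] by simp
qed

lemma prod_fa_measure_map_prod_image_inj_fst:
  assumes inv_f: "\<And>A. inj_on f A \<Longrightarrow> \<mu> (f ` A) = \<mu> A"
    and inv_g: "\<And>B. inj_on g B \<Longrightarrow> \<nu> (g ` B) = \<nu> B"
    and inj: "inj_on (map_prod f g) C" and inj_fst: "inj_on f (fst ` C)"
  shows "prod_fa_measure \<mu> \<nu> (map_prod f g ` C) = prod_fa_measure \<mu> \<nu> C"
  unfolding prod_fa_measure_def
proof (rule fa_integral_transfer[OF \<mu> range_measure_vimage_Pair range_measure_vimage_Pair])
  show "\<mu> (f ` A) = \<mu> A" if "A \<subseteq> fst ` C" for A
    by (rule inv_f[OF inj_on_subset[OF inj_fst that]])
  show "\<nu> (Pair a -` C) = 0" if "a \<notin> fst ` C" for a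
  proof -
    have "Pair a -` C = {}" using that by force
    then show ?thesis by (simp add: fa_prob_measure_empty[OF \<nu>])
  qed
  show "\<nu> (Pair x -` (map_prod f g ` C)) = 0" if "x \<notin> f ` fst ` C" for x
  proof -
    have "Pair x -` (map_prod f g ` C) = {}" using that by force
    then show ?thesis by (simp add: fa_prob_measure_empty[OF \<nu>])
  qed
  show "\<nu> (Pair (f a) -` (map_prod f g ` C)) = \<nu> (Pair a -` C)" if "a \<in> fst ` C" for a
    using vimage_Pair_map_prod_image[OF inj_fst that, of g] inv_g[OF inj_on_vimage_Pair[OF inj]] by simp
qed

text \<open>A point whose slice of the image has measure above \<open>1 / N\<close> comes from at least \<open>N\<close> slices of
  measure at most \<open>1 / N\<^sup>2\<close>.\<close>
lemma prod_fa_measure_map_prod_image_light: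
  assumes inv_f: "\<And>A. inj_on f A \<Longrightarrow> \<mu> (f ` A) = \<mu> A"
    and inv_g: "\<And>B. inj_on g B \<Longrightarrow> \<nu> (g ` B) = \<nu> B"
    and inj: "inj_on (map_prod f g) R" and "0 < N"
    and light: "\<And>a. real N * real N * \<nu> (Pair a -` R) \<le> 1"
  shows "prod_fa_measure \<mu> \<nu> (map_prod f g ` R) \<le> 2 / real N"
proof -
  let ?X = "{x. 1 / real N < \<nu> (Pair x -` (map_prod f g ` R))}"
  have "real N * \<mu> ?X \<le> 1"
  proof (rule fa_prob_measure_many_preimages[OF \<mu> inv_f])
    fix x assume x: "x \<in> ?X"
    show "infinite (f -` {x}) \<or> N \<le> card (f -` {x})"
    proof (rule ccontr)
      assume "\<not> ?thesis"
      then have fin: "finite (f -` {x})" "card (f -` {x}) \<le> N" by auto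
      have "Pair x -` (map_prod f g ` R) \<subseteq> (\<Union>a\<in>f -` {x}. g ` (Pair a -` R))"
      proof
        fix b assume "b \<in> Pair x -` (map_prod f g ` R)"
        then obtain a b' where "(a, b') \<in> R" "x = f a" "b = g b'" by auto
        then show "b \<in> (\<Union>a\<in>f -` {x}. g ` (Pair a -` R))" by auto
      qed
      then have "\<nu> (Pair x -` (map_prod f g ` R)) \<le> \<nu> (\<Union>a\<in>f -` {x}. g ` (Pair a -` R))"
        by (rule fa_prob_measure_mono[OF \<nu>])
      also have "\<dots> \<le> (\<Sum>a\<in>f -` {x}. \<nu> (g ` (Pair a -` R)))"
        by (rule fa_prob_measure_UN_le[OF \<nu> fin(1)])
      also have "\<dots> = (\<Sum>a\<in>f -` {x}. \<nu> (Pair a -` R))"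
        using inv_g[OF inj_on_vimage_Pair[OF inj]] by simp
      also have "\<dots> \<le> (\<Sum>a\<in>f -` {x}. 1 / (real N * real N))"
        using light \<open>0 < N\<close> by (intro sum_mono) (simp add: field_simps)
      also have "\<dots> \<le> 1 / real N"
        using fin(2) \<open>0 < N\<close> by (simp add: field_simps)
      finally show False using x by simp
    qed
  qed
  then have "\<mu> ?X \<le> 1 / real N" using \<open>0 < N\<close> by (simp add: field_simps)
  then show ?thesis using prod_fa_measure_le_level_set[of "1 / real N" "map_prod f g ` R"] by simp
qed

lemma prod_fa_measure_map_prod_image_approx:
  assumes inv_f: "\<And>A. inj_on f A \<Longrightarrow> \<mu> (f ` A) = \<mu> A"
    and inv_g: "\<And>B. inj_on g B \<Longrightarrow> \<nu> (g ` B) = \<nu> B"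
    and inj: "inj_on (map_prod f g) C" and "0 < N"
  shows "\<bar>prod_fa_measure \<mu> \<nu> (map_prod f g ` C) - prod_fa_measure \<mu> \<nu> C\<bar> \<le> 2 / real N"
proof -
  obtain R P where C: "C = R \<union> (\<Union>i<N * N. P i)" "R \<inter> (\<Union>i<N * N. P i) = {}"
      "disjoint_family_on P {..<N * N}"
    and inj_fst: "\<And>i. inj_on f (fst ` P i)"
    and light: "\<And>a. real (N * N) * \<nu> (Pair a -` R) \<le> 1"
    using split_light_and_inj_fst_pieces[OF \<nu> inj, of "N * N"] \<open>0 < N\<close> by auto
  have R_sub: "R \<subseteq> C" and P_sub: "\<And>i. i < N * N \<Longrightarrow> P i \<subseteq> C" using C(1) by auto
  have "prod_fa_measure \<mu> \<nu> (map_prod f g ` C) - prod_fa_measure \<mu> \<nu> C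
      = prod_fa_measure \<mu> \<nu> (map_prod f g ` R) - prod_fa_measure \<mu> \<nu> R"
  proof (rule fa_prob_measure_image_diff_eq[OF fa_prob_measure_prod inj C])
    fix i assume "i < N * N"
    show "prod_fa_measure \<mu> \<nu> (map_prod f g ` P i) = prod_fa_measure \<mu> \<nu> (P i)"
      by (rule prod_fa_measure_map_prod_image_inj_fst[OF inv_f inv_g
            inj_on_subset[OF inj P_sub[OF \<open>i < N * N\<close>]] inj_fst])
  qed
  moreover have "prod_fa_measure \<mu> \<nu> (map_prod f g ` R) \<le> 2 / real N"
    by (rule prod_fa_measure_map_prod_image_light[OF inv_f inv_g inj_on_subset[OF inj R_sub]
          \<open>0 < N\<close> light[unfolded of_nat_mult]])
  moreover have "prod_fa_measure \<mu> \<nu> R \<le> 2 / real N"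
  proof -
    have "\<nu> (Pair a -` R) \<le> 1 / real N" for a
    proof -
      have "real N * \<nu> (Pair a -` R) \<le> real (N * N) * \<nu> (Pair a -` R)"
        using \<open>0 < N\<close> fa_prob_measure_nonneg[OF \<nu>] by (intro mult_right_mono) simp_all
      also have "\<dots> \<le> 1" by (rule light)
      finally show ?thesis using \<open>0 < N\<close> by (simp add: le_divide_eq mult.commute)
    qed
    then have "{a. 1 / real N < \<nu> (Pair a -` R)} = {}" by (auto simp: not_less[symmetric])
    then have "prod_fa_measure \<mu> \<nu> R \<le> 1 / real N"
      using prod_fa_measure_le_level_set[of "1 / real N" R] fa_prob_measure_empty[OF \<mu>] by simp
    also have "\<dots> \<le> 2 / real N" by (simp add: divide_right_mono)
    finally show ?thesis .
  qed
  moreover have "0 \<le> prod_fa_measure \<mu> \<nu> R" "0 \<le> prod_fa_measure \<mu> \<nu> (map_prod f g ` R)"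
    by (simp_all add: fa_prob_measure_nonneg[OF fa_prob_measure_prod])
  ultimately show ?thesis by (simp only: abs_le_iff) linarith
qed

lemma prod_fa_measure_map_prod_image:
  assumes "\<And>A. inj_on f A \<Longrightarrow> \<mu> (f ` A) = \<mu> A" "\<And>B. inj_on g B \<Longrightarrow> \<nu> (g ` B) = \<nu> B"
    and "inj_on (map_prod f g) C"
  shows "prod_fa_measure \<mu> \<nu> (map_prod f g ` C) = prod_fa_measure \<mu> \<nu> C"
proof -
  let ?d = "\<bar>prod_fa_measure \<mu> \<nu> (map_prod f g ` C) - prod_fa_measure \<mu> \<nu> C\<bar>"
  have "?d \<le> 0 + 2 / real (Suc n)" for n
    using prod_fa_measure_map_prod_image_approx[OF assms, of "Suc n"] by simp
  then have "?d \<le> 0" by (rule LIMSEQ_le_vanishing[OF tendsto_const tendsto_const])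
  then show ?thesis by simp
qed

end

lemma left_fairly_amenable_prod:
  assumes "left_fairly_amenable m1" "left_fairly_amenable m2"
  shows "left_fairly_amenable (\<lambda>x y. (m1 (fst x) (fst y), m2 (snd x) (snd y)))"
proof -
  obtain \<mu> where \<mu>: "fa_prob_measure \<mu>" "left_fairly_invariant m1 \<mu>"
    using assms(1) by (auto simp: left_fairly_amenable_def)
  obtain \<nu> where \<nu>: "fa_prob_measure \<nu>" "left_fairly_invariant m2 \<nu>"
    using assms(2) by (auto simp: left_fairly_amenable_def)
  have "(\<lambda>y. (m1 (fst x) (fst y), m2 (snd x) (snd y))) = map_prod (m1 (fst x)) (m2 (snd x))" for x
    by auto
  then have "left_fairly_invariant (\<lambda>x y. (m1 (fst x) (fst y), m2 (snd x) (snd y)))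
      (prod_fa_measure \<mu> \<nu>)"
    using prod_fa_measure_map_prod_image[OF \<mu>(1) \<nu>(1)] \<mu>(2) \<nu>(2)
    by (simp add: left_fairly_invariant_def)
  then show ?thesis
    using fa_prob_measure_prod[OF \<mu>(1) \<nu>(1)] by (auto simp: left_fairly_amenable_def)
qed

lemma right_fairly_amenable_iff_left_flip:
  "right_fairly_amenable m \<longleftrightarrow> left_fairly_amenable (\<lambda>x y. m y x)"
  unfolding right_fairly_amenable_def left_fairly_amenable_def
    right_fairly_invariant_def left_fairly_invariant_def by simp

theorem mainTheorem11:
  shows "(left_fairly_amenable ((*) :: 'a::semigroup_mult \<Rightarrow> 'a \<Rightarrow> 'a) \<and>
          left_fairly_amenable ((*) :: 'b::semigroup_mult \<Rightarrow> 'b \<Rightarrow> 'b)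
            \<longrightarrow> left_fairly_amenable (prod_mult :: 'a \<times> 'b \<Rightarrow> 'a \<times> 'b \<Rightarrow> 'a \<times> 'b))
       \<and> (right_fairly_amenable ((*) :: 'a \<Rightarrow> 'a \<Rightarrow> 'a) \<and>
          right_fairly_amenable ((*) :: 'b \<Rightarrow> 'b \<Rightarrow> 'b)
            \<longrightarrow> right_fairly_amenable (prod_mult :: 'a \<times> 'b \<Rightarrow> 'a \<times> 'b \<Rightarrow> 'a \<times> 'b))"
proof -
  have prod_mult: "prod_mult = (\<lambda>x y. (fst x * fst y, snd x * snd y))"
    by (simp add: prod_mult_def fun_eq_iff)
  show ?thesis
    unfolding right_fairly_amenable_iff_left_flip prod_mult
    using left_fairly_amenable_prod[of "(*) :: 'a \<Rightarrow> 'a \<Rightarrow> 'a" "(*) :: 'b \<Rightarrow> 'b \<Rightarrow> 'b"]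
      left_fairly_amenable_prod[of "\<lambda>x y :: 'a. y * x" "\<lambda>x y :: 'b. y * x"]
    by simp
qed

end
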